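(* Let $M$ be a finite abelian group, $c\in\hat{M}$ with $c^2=1$, and $i\colon\hat{M}\setminus\{c\}\to\hat{M}\setminus\{1\}$ a bijection with $i(x)=x\,i(x^{-1})$ for all $x\ne c$. Let $F=\hat{M}\sqcup\{0\}$ with multiplication extending that of $\hat{M}$ by $0\cdot x=x\cdot0=0$, and with the operation $\oplus$ for which $0$ is the identity and, for $x,y\ne0$, $x\oplus y=0$ if $x=cy$ and $x\oplus y=x\,i(x/y)^{-1}$ otherwise. Then: (a) $\oplus$ is commutative; (b) $z(x\oplus y)=(zx)\oplus(zy)$ for all $x,y,z\in F$; (c) for every $x\in F$, $x\oplus cx=0$.
   Context: $\hat{M}$ is the Pontryagin dual of $M$, written multiplicatively with identity $1$. *)

theory Defs
  imports "HOL-Algebra.Algebra" Complex_Main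
begin

text \<open>Pontryagin dual of a finite abelian group G: the characters, i.e. homomorphisms
  from G into the unit circle of the complex numbers (taken to be 1 outside the carrier,
  so that they are uniquely determined by their values on the carrier), with
  pointwise multiplication.\<close>

definition dual_chars :: "('a, 'b) monoid_scheme \<Rightarrow> ('a \<Rightarrow> complex) set" where
  "dual_chars G = {\<chi>. (\<forall>x\<in>carrier G. cmod (\<chi> x) = 1)
      \<and> (\<forall>x\<in>carrier G. \<forall>y\<in>carrier G. \<chi> (x \<otimes>\<^bsub>G\<^esub> y) = \<chi> x * \<chi> y)
      \<and> (\<forall>x. x \<notin> carrier G \<longrightarrow> \<chi> x = 1)}"

definition dual :: "('a, 'b) monoid_scheme \<Rightarrow> ('a \<Rightarrow> complex) monoid" where
  "dual G = \<lparr>carrier = dual_chars G, monoid.mult = (\<lambda>\<chi> \<psi> x. \<chi> x * \<psi> x), monoid.one = (\<lambda>x. 1)\<rparr>"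

text \<open>The set F = dual(M) disjoint-union {0}; None plays the role of 0.\<close>

definition Fset :: "('a, 'b) monoid_scheme \<Rightarrow> ('a \<Rightarrow> complex) option set" where
  "Fset G = Some ` carrier (dual G) \<union> {None}"

fun Fmul :: "('a, 'b) monoid_scheme \<Rightarrow> ('a \<Rightarrow> complex) option \<Rightarrow> ('a \<Rightarrow> complex) option
      \<Rightarrow> ('a \<Rightarrow> complex) option" where
  "Fmul G (Some x) (Some y) = Some (x \<otimes>\<^bsub>dual G\<^esub> y)"
| "Fmul G _ _ = None"

fun Foplus :: "('a, 'b) monoid_scheme \<Rightarrow> ('a \<Rightarrow> complex) \<Rightarrow> (('a \<Rightarrow> complex) \<Rightarrow> ('a \<Rightarrow> complex))
      \<Rightarrow> ('a \<Rightarrow> complex) option \<Rightarrow> ('a \<Rightarrow> complex) option \<Rightarrow> ('a \<Rightarrow> complex) option" where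
  "Foplus G c i None y = y"
| "Foplus G c i (Some x) None = Some x"
| "Foplus G c i (Some x) (Some y) =
     (if x = c \<otimes>\<^bsub>dual G\<^esub> y then None
      else Some (x \<otimes>\<^bsub>dual G\<^esub> inv\<^bsub>dual G\<^esub> (i (x \<otimes>\<^bsub>dual G\<^esub> inv\<^bsub>dual G\<^esub> y))))"

end

theory Submission
  imports Defs
begin

text \<open>Distributivity is cancellation of z in (zx)/(zy) = x/y, and x \<oplus> cx = 0 is c^2 = 1.
  Commutativity comes from the relation i(t) = t i(1/t) at t = x/y, which turns
  x/i(x/y) into y/i(y/x).\<close>

lemma comm_group_dual: "comm_group (dual G)"
proof (rule comm_groupI)
  show "\<And>x y. x \<in> carrier (dual G) \<Longrightarrow> y \<in> carrier (dual G) \<Longrightarrow> x \<otimes>\<^bsub>dual G\<^esub> y \<in> carrier (dual G)"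
    by (auto simp: dual_def dual_chars_def norm_mult)
  show "\<one>\<^bsub>dual G\<^esub> \<in> carrier (dual G)"
    by (auto simp: dual_def dual_chars_def)
  show "\<And>x y z. x \<otimes>\<^bsub>dual G\<^esub> y \<otimes>\<^bsub>dual G\<^esub> z = x \<otimes>\<^bsub>dual G\<^esub> (y \<otimes>\<^bsub>dual G\<^esub> z)"
    by (auto simp: dual_def mult.assoc)
  show "\<And>x y. x \<otimes>\<^bsub>dual G\<^esub> y = y \<otimes>\<^bsub>dual G\<^esub> x"
    by (auto simp: dual_def mult.commute)
  show "\<And>x. \<one>\<^bsub>dual G\<^esub> \<otimes>\<^bsub>dual G\<^esub> x = x"
    by (auto simp: dual_def)
  fix \<chi> assume \<chi>: "\<chi> \<in> carrier (dual G)"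
  have nonzero: "\<chi> a \<noteq> 0" for a
    using \<chi> by (cases "a \<in> carrier G") (auto simp: dual_def dual_chars_def)
  have "(\<lambda>a. inverse (\<chi> a)) \<in> carrier (dual G)"
    using \<chi> by (auto simp: dual_def dual_chars_def norm_inverse)
  moreover have "(\<lambda>a. inverse (\<chi> a)) \<otimes>\<^bsub>dual G\<^esub> \<chi> = \<one>\<^bsub>dual G\<^esub>"
    using nonzero by (auto simp: dual_def)
  ultimately show "\<exists>\<psi>\<in>carrier (dual G). \<psi> \<otimes>\<^bsub>dual G\<^esub> \<chi> = \<one>\<^bsub>dual G\<^esub>" by blast
qed

lemma Fset_cases [consumes 1, case_names zero unit]:
  assumes "x \<in> Fset G"
  obtains "x = None" | a where "x = Some a" "a \<in> carrier (dual G)"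
  using assms by (auto simp: Fset_def)

lemma (in comm_group) eq_mult_involution_iff:
  assumes "c \<in> carrier G" "c \<otimes> c = \<one>" "x \<in> carrier G" "y \<in> carrier G"
  shows "x = c \<otimes> y \<longleftrightarrow> y = c \<otimes> x"
  using assms by (metis m_assoc l_one)

lemma (in comm_group) mult_inv_eq_iff:
  assumes "c \<in> carrier G" "x \<in> carrier G" "y \<in> carrier G"
  shows "x \<otimes> inv y = c \<longleftrightarrow> x = c \<otimes> y"
  using assms by (metis inv_solve_right)

lemma (in comm_group) mult_inv_swap_quotient:
  assumes "a \<in> carrier G" "b \<in> carrier G" "i (b \<otimes> inv a) \<in> carrier G"
    and "i (a \<otimes> inv b) = (a \<otimes> inv b) \<otimes> i (inv (a \<otimes> inv b))"
  shows "a \<otimes> inv (i (a \<otimes> inv b)) = b \<otimes> inv (i (b \<otimes> inv a))"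
proof -
  have inv_quotient: "inv (a \<otimes> inv b) = b \<otimes> inv a"
    using assms(1,2) by (simp add: inv_mult_group m_comm)
  have "a \<otimes> inv (i (a \<otimes> inv b)) = a \<otimes> inv ((a \<otimes> inv b) \<otimes> i (b \<otimes> inv a))"
    using assms(4) inv_quotient by simp
  also have "\<dots> = b \<otimes> inv (i (b \<otimes> inv a))"
    using assms(1-3) by (simp add: inv_mult_group m_assoc[symmetric] m_comm m_lcomm)
  finally show ?thesis .
qed

lemma Foplus_commute_units:
  assumes c: "c \<in> carrier (dual G)" "c \<otimes>\<^bsub>dual G\<^esub> c = \<one>\<^bsub>dual G\<^esub>"
    and i_closed: "i ` (carrier (dual G) - {c}) \<subseteq> carrier (dual G)"
    and i_inv: "\<forall>t \<in> carrier (dual G) - {c}. i t = t \<otimes>\<^bsub>dual G\<^esub> i (inv\<^bsub>dual G\<^esub> t)"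
    and a: "a \<in> carrier (dual G)" and b: "b \<in> carrier (dual G)"
  shows "Foplus G c i (Some a) (Some b) = Foplus G c i (Some b) (Some a)"
proof -
  interpret D: comm_group "dual G" by (rule comm_group_dual)
  have swap: "a = c \<otimes>\<^bsub>dual G\<^esub> b \<longleftrightarrow> b = c \<otimes>\<^bsub>dual G\<^esub> a"
    using D.eq_mult_involution_iff[OF c a b] .
  show ?thesis
  proof (cases "a = c \<otimes>\<^bsub>dual G\<^esub> b")
    case True
    with swap show ?thesis by simp
  next
    case False
    then have "b \<otimes>\<^bsub>dual G\<^esub> inv\<^bsub>dual G\<^esub> a \<noteq> c"
      using swap D.mult_inv_eq_iff[OF c(1) b a] by simp
    then have "i (b \<otimes>\<^bsub>dual G\<^esub> inv\<^bsub>dual G\<^esub> a) \<in> carrier (dual G)"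
      using i_closed a b by auto
    moreover have "a \<otimes>\<^bsub>dual G\<^esub> inv\<^bsub>dual G\<^esub> b \<noteq> c"
      using False D.mult_inv_eq_iff[OF c(1) a b] by simp
    ultimately have "a \<otimes>\<^bsub>dual G\<^esub> inv\<^bsub>dual G\<^esub> (i (a \<otimes>\<^bsub>dual G\<^esub> inv\<^bsub>dual G\<^esub> b))
        = b \<otimes>\<^bsub>dual G\<^esub> inv\<^bsub>dual G\<^esub> (i (b \<otimes>\<^bsub>dual G\<^esub> inv\<^bsub>dual G\<^esub> a))"
      using D.mult_inv_swap_quotient[OF a b] i_inv a b by simp
    with False swap show ?thesis by simp
  qed
qed

lemma Foplus_commute:
  assumes "c \<in> carrier (dual G)" "c \<otimes>\<^bsub>dual G\<^esub> c = \<one>\<^bsub>dual G\<^esub>"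
    and "i ` (carrier (dual G) - {c}) \<subseteq> carrier (dual G)"
    and "\<forall>t \<in> carrier (dual G) - {c}. i t = t \<otimes>\<^bsub>dual G\<^esub> i (inv\<^bsub>dual G\<^esub> t)"
    and "x \<in> Fset G" "y \<in> Fset G"
  shows "Foplus G c i x y = Foplus G c i y x"
  using \<open>x \<in> Fset G\<close> \<open>y \<in> Fset G\<close>
  by (cases rule: Fset_cases[case_product Fset_cases])
    (simp_all add: Foplus_commute_units[OF assms(1-4)] del: Foplus.simps(3))

lemma Fmul_Foplus_distrib_units:
  assumes c: "c \<in> carrier (dual G)" and w: "w \<in> carrier (dual G)"
    and a: "a \<in> carrier (dual G)" and b: "b \<in> carrier (dual G)"
  shows "Fmul G (Some w) (Foplus G c i (Some a) (Some b))
    = Foplus G c i (Some (w \<otimes>\<^bsub>dual G\<^esub> a)) (Some (w \<otimes>\<^bsub>dual G\<^esub> b))"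
proof -
  interpret D: comm_group "dual G" by (rule comm_group_dual)
  have "w \<otimes>\<^bsub>dual G\<^esub> a = c \<otimes>\<^bsub>dual G\<^esub> (w \<otimes>\<^bsub>dual G\<^esub> b) \<longleftrightarrow> a = c \<otimes>\<^bsub>dual G\<^esub> b"
    using a b c w by (metis D.m_closed D.m_lcomm D.l_cancel)
  moreover have "(w \<otimes>\<^bsub>dual G\<^esub> a) \<otimes>\<^bsub>dual G\<^esub> inv\<^bsub>dual G\<^esub> (w \<otimes>\<^bsub>dual G\<^esub> b)
      = a \<otimes>\<^bsub>dual G\<^esub> inv\<^bsub>dual G\<^esub> b"
    using a b w by (simp add: D.inv_mult_group D.m_assoc D.m_lcomm D.m_comm)
  moreover have "w \<otimes>\<^bsub>dual G\<^esub> (a \<otimes>\<^bsub>dual G\<^esub> q) = (w \<otimes>\<^bsub>dual G\<^esub> a) \<otimes>\<^bsub>dual G\<^esub> q" for q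
    by (simp add: dual_def mult.assoc)
  ultimately show ?thesis by simp
qed

lemma Fmul_Foplus_distrib:
  assumes "c \<in> carrier (dual G)" and "x \<in> Fset G" "y \<in> Fset G" "z \<in> Fset G"
  shows "Fmul G z (Foplus G c i x y) = Foplus G c i (Fmul G z x) (Fmul G z y)"
  using \<open>z \<in> Fset G\<close> \<open>x \<in> Fset G\<close> \<open>y \<in> Fset G\<close>
  by (cases rule: Fset_cases[case_product Fset_cases[case_product Fset_cases]])
    (simp_all add: Fmul_Foplus_distrib_units[OF assms(1)] del: Foplus.simps(3))

lemma Foplus_Fmul_self:
  assumes c: "c \<in> carrier (dual G)" "c \<otimes>\<^bsub>dual G\<^esub> c = \<one>\<^bsub>dual G\<^esub>"
    and "x \<in> Fset G"
  shows "Foplus G c i x (Fmul G (Some c) x) = None"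
  using \<open>x \<in> Fset G\<close>
proof (cases rule: Fset_cases)
  case zero
  then show ?thesis by simp
next
  case (unit a)
  interpret D: comm_group "dual G" by (rule comm_group_dual)
  have "c \<otimes>\<^bsub>dual G\<^esub> (c \<otimes>\<^bsub>dual G\<^esub> a) = a"
    using c \<open>a \<in> carrier (dual G)\<close> by (simp add: D.m_assoc[symmetric])
  with \<open>x = Some a\<close> show ?thesis by simp
qed

theorem mainTheorem9:
  fixes M :: "('a, 'b) monoid_scheme"
    and c :: "'a \<Rightarrow> complex"
    and i :: "('a \<Rightarrow> complex) \<Rightarrow> ('a \<Rightarrow> complex)"
  assumes "comm_group M" and "finite (carrier M)"
    and "c \<in> carrier (dual M)" and "c \<otimes>\<^bsub>dual M\<^esub> c = \<one>\<^bsub>dual M\<^esub>"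
    and "bij_betw i (carrier (dual M) - {c}) (carrier (dual M) - {\<one>\<^bsub>dual M\<^esub>})"
    and "\<forall>x \<in> carrier (dual M) - {c}. i x = x \<otimes>\<^bsub>dual M\<^esub> i (inv\<^bsub>dual M\<^esub> x)"
  shows "(\<forall>x \<in> Fset M. \<forall>y \<in> Fset M. Foplus M c i x y = Foplus M c i y x)
    \<and> (\<forall>x \<in> Fset M. \<forall>y \<in> Fset M. \<forall>z \<in> Fset M.
         Fmul M z (Foplus M c i x y) = Foplus M c i (Fmul M z x) (Fmul M z y))
    \<and> (\<forall>x \<in> Fset M. Foplus M c i x (Fmul M (Some c) x) = None)"
proof (intro conjI ballI)
  have i_closed: "i ` (carrier (dual M) - {c}) \<subseteq> carrier (dual M)"
    using bij_betw_imp_surj_on[OF assms(5)] by blast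
  show "Foplus M c i x y = Foplus M c i y x" if "x \<in> Fset M" "y \<in> Fset M" for x y
    using Foplus_commute[OF assms(3,4) i_closed assms(6) that] .
  show "Fmul M z (Foplus M c i x y) = Foplus M c i (Fmul M z x) (Fmul M z y)"
    if "x \<in> Fset M" "y \<in> Fset M" "z \<in> Fset M" for x y z
    using Fmul_Foplus_distrib[OF assms(3) that] .
  show "Foplus M c i x (Fmul M (Some c) x) = None" if "x \<in> Fset M" for x
    using Foplus_Fmul_self[OF assms(3,4) that] .
qed

end
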